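(* Let $f,g$ satisfy the standing assumptions below and suppose $\beta\ge\frac{2M_fQ_g}{\mu^3}$. Then for any $(x,y)\in\mathbb{R}^n\times\mathbb{R}^p$, $(x,y)$ is a $\mathcal{D}_h$-stationary point of (CDB) (i.e. $0\in\mathcal{D}_h(x,y)$) if and only if $0\in\hat{\mathcal{D}}_h(x,y)$.
   Context: Standing assumptions. (A1) Constants $M_f,\mu,L_g,Q_g>0$ exist such that: $f:\mathbb{R}^n\times\mathbb{R}^p\to\mathbb{R}$ is $M_f$-Lipschitz; $g$ is twice differentiable with $\nabla^2_{yy}g\succeq\mu I_p$; $\nabla g$ is $L_g$-Lipschitz; $\nabla^2_{yy}g,\nabla^2_{xy}g$ are $Q_g$-Lipschitz; $\nabla^2_{yy}g$ is continuously differentiable ($\nabla^2_{xy}g\in\mathbb{R}^{n\times p}$ has entries $\partial^2g/\partial x_i\partial y_j$). (A2) $f$ is a potential function of a conservative field $\mathcal{D}_f$ with compact convex values of norm at most $M_f$. Notation (all at $(x,y)$): $H=\nabla^2_{yy}g$; $\mathcal{A}(x,y):=y-H^{-1}\nabla_yg$; $\nabla^3_{xyy}g(x,y)[d]:=\lim_{t\to0}\frac1t(\nabla^2_{xy}g(x,y+td)-\nabla^2_{xy}g(x,y))$, $\nabla^3_{yyy}g(x,y)[d]:=\lim_{t\to0}\frac1t(\nabla^2_{yy}g(x,y+td)-\nabla^2_{yy}g(x,y))$; $J_{A,x}:=-\nabla^2_{xy}gH^{-1}+\nabla^3_{xyy}g[H^{-1}\nabla_yg]H^{-1}$, $J_{A,y}:=\nabla^3_{yyy}g[H^{-1}\nabla_yg]H^{-1}$;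 $\mathcal{D}_h(x,y):=\{(d_x+J_{A,x}d_y+\beta\nabla^2_{xy}g\nabla_yg,\ J_{A,y}d_y+\beta H\nabla_yg):(d_x,d_y)\in\mathcal{D}_f(x,\mathcal{A}(x,y))\}$; $\hat{\mathcal{D}}_h(x,y):=\{(d_x-\nabla^2_{xy}g(H^{-1}d_y-\beta\nabla_yg),\ \beta\nabla_yg):(d_x,d_y)\in\mathcal{D}_f(x,\mathcal{A}(x,y))\}$. *)

theory Defs
  imports "HOL-Analysis.Analysis"
begin

definition abs_continuous_on :: "real set \<Rightarrow> (real \<Rightarrow> 'a::real_normed_vector) \<Rightarrow> bool" where
  "abs_continuous_on S \<gamma> \<longleftrightarrow>
     (\<forall>\<epsilon>>0. \<exists>\<delta>>0. \<forall>(I::nat set) u v.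
        finite I \<and> (\<forall>k\<in>I. u k \<in> S \<and> v k \<in> S \<and> u k \<le> v k \<and> {u k..v k} \<subseteq> S) \<and>
        (\<forall>k\<in>I. \<forall>l\<in>I. k \<noteq> l \<longrightarrow> {u k<..<v k} \<inter> {u l<..<v l} = {}) \<and>
        (\<Sum>k\<in>I. v k - u k) < \<delta>
        \<longrightarrow> (\<Sum>k\<in>I. norm (\<gamma> (v k) - \<gamma> (u k))) < \<epsilon>)"

definition field_integrand :: "('a::euclidean_space \<Rightarrow> 'a set) \<Rightarrow> (real \<Rightarrow> 'a) \<Rightarrow> real \<Rightarrow> real" where
  "field_integrand D \<gamma> t = Sup ((\<lambda>v. vector_derivative \<gamma> (at t within {0..1}) \<bullet> v) ` D (\<gamma> t))"

definition conservative_field :: "('a::euclidean_space \<Rightarrow> 'a set) \<Rightarrow> bool" where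
  "conservative_field D \<longleftrightarrow>
     closed {(z, v). v \<in> D z} \<and> (\<forall>z. D z \<noteq> {} \<and> compact (D z)) \<and>
     (\<forall>\<gamma>. abs_continuous_on {0..1} \<gamma> \<and> \<gamma> 0 = \<gamma> 1 \<longrightarrow>
        (field_integrand D \<gamma> has_integral 0) {0..1})"

definition potential_of :: "('a::euclidean_space \<Rightarrow> real) \<Rightarrow> ('a \<Rightarrow> 'a set) \<Rightarrow> bool" where
  "potential_of f D \<longleftrightarrow> conservative_field D \<and>
     (\<forall>\<gamma>. abs_continuous_on {0..1} \<gamma> \<longrightarrow>
        (field_integrand D \<gamma> has_integral (f (\<gamma> 1) - f (\<gamma> 0))) {0..1})"

definition mat_norm :: "real^'m^'k \<Rightarrow> real" where
  "mat_norm M = onorm (\<lambda>v. M *v v)"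

text \<open>Gy x y = nabla_y g(x,y); Hyy x y = nabla^2_yy g(x,y) (p x p);
  Hxy x y = nabla^2_xy g(x,y) (n x p, entries d^2 g / dx_i dy_j).\<close>

definition A_map :: "(real^'n \<Rightarrow> real^'p \<Rightarrow> real^'p) \<Rightarrow> (real^'n \<Rightarrow> real^'p \<Rightarrow> real^'p^'p)
    \<Rightarrow> real^'n \<Rightarrow> real^'p \<Rightarrow> real^'p" where
  "A_map Gy Hyy x y = y - matrix_inv (Hyy x y) *v Gy x y"

definition D3xyy :: "(real^'n \<Rightarrow> real^'p \<Rightarrow> real^'p^'n) \<Rightarrow> real^'n \<Rightarrow> real^'p \<Rightarrow> real^'p \<Rightarrow> real^'p^'n" where
  "D3xyy Hxy x y d = Lim (at (0::real)) (\<lambda>t. (1 / t) *\<^sub>R (Hxy x (y + t *\<^sub>R d) - Hxy x y))"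

definition D3yyy :: "(real^'n \<Rightarrow> real^'p \<Rightarrow> real^'p^'p) \<Rightarrow> real^'n \<Rightarrow> real^'p \<Rightarrow> real^'p \<Rightarrow> real^'p^'p" where
  "D3yyy Hyy x y d = Lim (at (0::real)) (\<lambda>t. (1 / t) *\<^sub>R (Hyy x (y + t *\<^sub>R d) - Hyy x y))"

definition JAx :: "(real^'n \<Rightarrow> real^'p \<Rightarrow> real^'p) \<Rightarrow> (real^'n \<Rightarrow> real^'p \<Rightarrow> real^'p^'p)
    \<Rightarrow> (real^'n \<Rightarrow> real^'p \<Rightarrow> real^'p^'n) \<Rightarrow> real^'n \<Rightarrow> real^'p \<Rightarrow> real^'p^'n" where
  "JAx Gy Hyy Hxy x y =
     - (Hxy x y ** matrix_inv (Hyy x y))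
     + D3xyy Hxy x y (matrix_inv (Hyy x y) *v Gy x y) ** matrix_inv (Hyy x y)"

definition JAy :: "(real^'n \<Rightarrow> real^'p \<Rightarrow> real^'p) \<Rightarrow> (real^'n \<Rightarrow> real^'p \<Rightarrow> real^'p^'p)
    \<Rightarrow> real^'n \<Rightarrow> real^'p \<Rightarrow> real^'p^'p" where
  "JAy Gy Hyy x y = D3yyy Hyy x y (matrix_inv (Hyy x y) *v Gy x y) ** matrix_inv (Hyy x y)"

text \<open>D_h(x,y) and hat D_h(x,y); Df is the conservative field D_f of f (curried).\<close>
definition Dh :: "real \<Rightarrow> (real^'n \<Rightarrow> real^'p \<Rightarrow> ((real^'n) \<times> (real^'p)) set)
    \<Rightarrow> (real^'n \<Rightarrow> real^'p \<Rightarrow> real^'p) \<Rightarrow> (real^'n \<Rightarrow> real^'p \<Rightarrow> real^'p^'p)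
    \<Rightarrow> (real^'n \<Rightarrow> real^'p \<Rightarrow> real^'p^'n) \<Rightarrow> real^'n \<Rightarrow> real^'p \<Rightarrow> ((real^'n) \<times> (real^'p)) set" where
  "Dh \<beta> Df Gy Hyy Hxy x y =
     (\<lambda>(dx, dy). (dx + JAx Gy Hyy Hxy x y *v dy + \<beta> *\<^sub>R (Hxy x y *v Gy x y),
                  JAy Gy Hyy x y *v dy + \<beta> *\<^sub>R (Hyy x y *v Gy x y)))
     ` Df x (A_map Gy Hyy x y)"

definition Dh_hat :: "real \<Rightarrow> (real^'n \<Rightarrow> real^'p \<Rightarrow> ((real^'n) \<times> (real^'p)) set)
    \<Rightarrow> (real^'n \<Rightarrow> real^'p \<Rightarrow> real^'p) \<Rightarrow> (real^'n \<Rightarrow> real^'p \<Rightarrow> real^'p^'p)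
    \<Rightarrow> (real^'n \<Rightarrow> real^'p \<Rightarrow> real^'p^'n) \<Rightarrow> real^'n \<Rightarrow> real^'p \<Rightarrow> ((real^'n) \<times> (real^'p)) set" where
  "Dh_hat \<beta> Df Gy Hyy Hxy x y =
     (\<lambda>(dx, dy). (dx - Hxy x y *v (matrix_inv (Hyy x y) *v dy - \<beta> *\<^sub>R Gy x y),
                  \<beta> *\<^sub>R Gy x y))
     ` Df x (A_map Gy Hyy x y)"

end

theory Submission
  imports Defs
begin

text \<open>Write \<open>v = H\<^sup>-\<^sup>1 \<nabla>\<^sub>y g\<close>. The \<open>y\<close>-component of \<open>0 \<in> Dh\<close> reads
  \<open>\<beta> H \<nabla>\<^sub>y g = - \<nabla>\<^sup>3\<^sub>y\<^sub>y\<^sub>y g[v] H\<^sup>-\<^sup>1 d\<^sub>y\<close>. Strong convexity bounds the left side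
  below by \<open>\<beta> \<mu>\<^sup>2 |v|\<close>. Since the Hessian is \<open>Q\<^sub>g\<close>-Lipschitz, \<open>|\<nabla>\<^sup>3\<^sub>y\<^sub>y\<^sub>y g[v]| \<le> Q\<^sub>g |v|\<close>,
  so the right side is at most \<open>Q\<^sub>g |v| M\<^sub>f / \<mu>\<close>. As \<open>\<beta> \<mu>\<^sup>3 > M\<^sub>f Q\<^sub>g\<close>, \<open>v = 0\<close>, i.e. \<open>\<nabla>\<^sub>y g = 0\<close>; the \<open>y\<close>-component
  of \<open>0 \<in> Dh_hat\<close> says so directly. Where \<open>\<nabla>\<^sub>y g = 0\<close>, the third-derivative terms
  vanish and the sets \<open>Dh\<close> and \<open>Dh_hat\<close> coincide.\<close>

lemma tendsto_difference_quotient: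
  fixes \<phi> :: "real \<Rightarrow> 'a::real_normed_vector"
  assumes "(\<phi> has_derivative \<phi>') (at 0)"
  shows "((\<lambda>t. (1 / t) *\<^sub>R (\<phi> t - \<phi> 0)) \<longlongrightarrow> \<phi>' 1) (at 0)"
proof -
  have lin: "\<phi>' t = t *\<^sub>R \<phi>' 1" for t
    using linear_cmul[OF has_derivative_linear[OF assms], of t 1] by simp
  have remainder: "((\<lambda>t. norm (\<phi> t - \<phi> 0 - \<phi>' t) / norm t) \<longlongrightarrow> 0) (at 0)"
    using assms by (simp add: has_derivative_iff_norm)
  have "norm (\<phi> t - \<phi> 0 - \<phi>' t) / norm t = norm ((1 / t) *\<^sub>R (\<phi> t - \<phi> 0) - \<phi>' 1)"
    if "t \<noteq> 0" for t
  proof -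
    have "(1 / t) *\<^sub>R (\<phi> t - \<phi> 0) - \<phi>' 1 = (1 / t) *\<^sub>R (\<phi> t - \<phi> 0 - \<phi>' t)"
      using that by (simp add: lin[of t] scaleR_diff_right)
    then show ?thesis
      by (simp add: divide_inverse_commute)
  qed
  then have "\<forall>\<^sub>F t in at 0. norm (\<phi> t - \<phi> 0 - \<phi>' t) / norm t
               = norm ((1 / t) *\<^sub>R (\<phi> t - \<phi> 0) - \<phi>' 1)"
    by (simp add: eventually_at_filter)
  from Lim_transform_eventually[OF remainder this]
  show ?thesis
    using Lim_null tendsto_norm_zero_iff by blast
qed

lemma tendsto_directional_difference_quotient:
  fixes K :: "'a::real_normed_vector \<Rightarrow> 'b::real_normed_vector \<Rightarrow> 'c::real_normed_vector"
  assumes "((\<lambda>z. K (fst z) (snd z)) has_derivative K') (at (x, y))"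
  shows "((\<lambda>t. (1 / t) *\<^sub>R (K x (y + t *\<^sub>R v) - K x y)) \<longlongrightarrow> K' (0, v)) (at 0)"
proof -
  have "((\<lambda>t::real. (x, y + t *\<^sub>R v)) has_derivative (\<lambda>t. (0, t *\<^sub>R v))) (at 0)"
    by (auto intro!: derivative_eq_intros)
  moreover have "((\<lambda>z. K (fst z) (snd z)) has_derivative K') (at ((\<lambda>t. (x, y + t *\<^sub>R v)) 0))"
    using assms by simp
  ultimately have "((\<lambda>z. K (fst z) (snd z)) \<circ> (\<lambda>t. (x, y + t *\<^sub>R v))
                     has_derivative K' \<circ> (\<lambda>t. (0, t *\<^sub>R v))) (at 0)"
    by (rule diff_chain_at)
  then have "((\<lambda>t. K x (y + t *\<^sub>R v)) has_derivative (\<lambda>t. K' (0, t *\<^sub>R v))) (at 0)"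
    by (simp add: o_def)
  from tendsto_difference_quotient[OF this] show ?thesis
    by simp
qed

lemma bounded_linear_matrix_vector_mult_left:
  "bounded_linear (\<lambda>A::real^'n^'m. A *v z)"
proof -
  have "linear (\<lambda>A::real^'n^'m. A *v z)"
    by (rule linearI) (auto simp: vec_eq_iff matrix_vector_mult_def sum.distrib sum_distrib_left algebra_simps)
  then show ?thesis
    by (simp add: linear_conv_bounded_linear)
qed

lemma uminus_matrix_vector_mult: "(- A) *v w = - (A *v w)" for A :: "real^'n^'m"
  by (simp add: matrix_vector_mult_def vec_eq_iff sum_negf)

lemma norm_matrix_vector_mult_le_mat_norm: "norm (M *v v) \<le> mat_norm M * norm v"
  unfolding mat_norm_def by (rule onorm) simp

lemma mat_norm_scaleR: "mat_norm (c *\<^sub>R M) = \<bar>c\<bar> * mat_norm M"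
proof -
  have "(\<lambda>v. (c *\<^sub>R M) *v v) = (\<lambda>v. c *\<^sub>R (M *v v))"
    by (simp add: scaleR_matrix_vector_assoc)
  then show ?thesis
    unfolding mat_norm_def by (simp add: onorm_scaleR)
qed

lemma norm_limit_matrix_vector_mult_le:
  fixes M :: "'i \<Rightarrow> real^'n^'m"
  assumes "(M \<longlongrightarrow> L) F" "F \<noteq> bot" "\<forall>\<^sub>F i in F. mat_norm (M i) \<le> C"
  shows "norm (L *v z) \<le> C * norm z"
proof (rule tendsto_upperbound)
  show "((\<lambda>i. norm (M i *v z)) \<longlongrightarrow> norm (L *v z)) F"
    by (intro tendsto_norm bounded_linear.tendsto[OF bounded_linear_matrix_vector_mult_left] assms(1))
  show "\<forall>\<^sub>F i in F. norm (M i *v z) \<le> C * norm z"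
    using assms(3) by eventually_elim
      (meson norm_matrix_vector_mult_le_mat_norm mult_right_mono norm_ge_zero order_trans)
qed (rule assms(2))

lemma norm_Lim_directional_difference_quotient_le:
  fixes K :: "'a::real_normed_vector \<Rightarrow> 'b::real_normed_vector \<Rightarrow> real^'n^'m"
  assumes "((\<lambda>z. K (fst z) (snd z)) has_derivative K') (at (x, y))"
    and lipschitz: "\<And>a b a' b'. mat_norm (K a b - K a' b') \<le> Q * dist (a, b) (a', b')"
  shows "norm (Lim (at 0) (\<lambda>t. (1 / t) *\<^sub>R (K x (y + t *\<^sub>R v) - K x y)) *v z) \<le> Q * norm v * norm z"
proof -
  note lim = tendsto_directional_difference_quotient[OF assms(1), of v]
  have "mat_norm ((1 / t) *\<^sub>R (K x (y + t *\<^sub>R v) - K x y)) \<le> Q * norm v" if "t \<noteq> 0" for t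
  proof -
    have "mat_norm ((1 / t) *\<^sub>R (K x (y + t *\<^sub>R v) - K x y))
          = mat_norm (K x (y + t *\<^sub>R v) - K x y) / \<bar>t\<bar>"
      by (simp add: mat_norm_scaleR divide_inverse_commute)
    also have "\<dots> \<le> Q * dist (x, y + t *\<^sub>R v) (x, y) / \<bar>t\<bar>"
      by (intro divide_right_mono lipschitz) simp
    also have "\<dots> = Q * norm v"
      using that by (simp add: dist_Pair_Pair dist_norm)
    finally show ?thesis .
  qed
  then have "\<forall>\<^sub>F t in at 0. mat_norm ((1 / t) *\<^sub>R (K x (y + t *\<^sub>R v) - K x y)) \<le> Q * norm v"
    by (simp add: eventually_at_filter)
  from norm_limit_matrix_vector_mult_le[OF lim trivial_limit_at this]
  show ?thesis
    by (simp add: tendsto_Lim[OF trivial_limit_at lim])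
qed

lemma coercive_matrix_norm_mult_ge:
  fixes H :: "real^'n^'n"
  assumes coercive: "\<And>v. \<mu> * (v \<bullet> v) \<le> v \<bullet> (H *v v)"
  shows "\<mu> * norm u \<le> norm (H *v u)"
proof (cases "u = 0")
  case False
  have "\<mu> * norm u * norm u \<le> norm u * norm (H *v u)"
    using coercive[of u] norm_cauchy_schwarz[of u "H *v u"]
    by (simp add: dot_square_norm power2_eq_square)
  with False show ?thesis
    by (simp add: mult.commute)
qed simp

lemma coercive_matrix_invertible:
  fixes H :: "real^'n^'n"
  assumes "\<mu> > 0" and coercive: "\<And>v. \<mu> * (v \<bullet> v) \<le> v \<bullet> (H *v v)"
  shows "invertible H"
proof -
  have "u = 0" if "H *v u = 0" for u
    using coercive_matrix_norm_mult_ge[OF coercive, of u] that \<open>\<mu> > 0\<close>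
    by (simp add: mult_le_0_iff)
  then show ?thesis
    using invertible_left_inverse matrix_left_invertible_ker by blast
qed

lemma invertible_matrix_inv:
  fixes A :: "real^'n^'n"
  assumes "invertible A"
  shows "A *v (matrix_inv A *v w) = w" and "matrix_inv A *v (A *v w) = w"
proof -
  have "A ** matrix_inv A = mat 1 \<and> matrix_inv A ** A = mat 1"
    using assms unfolding invertible_def matrix_inv_def by (rule someI_ex)
  then show "A *v (matrix_inv A *v w) = w" and "matrix_inv A *v (A *v w) = w"
    by (simp_all add: matrix_vector_mul_assoc)
qed

lemma coercive_matrix_norm_matrix_inv_mult_le:
  fixes H :: "real^'n^'n"
  assumes "\<mu> > 0" and coercive: "\<And>v. \<mu> * (v \<bullet> v) \<le> v \<bullet> (H *v v)"
  shows "norm (matrix_inv H *v w) \<le> norm w / \<mu>"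
  using coercive_matrix_norm_mult_ge[OF coercive, of "matrix_inv H *v w"] \<open>\<mu> > 0\<close>
  by (simp add: invertible_matrix_inv coercive_matrix_invertible[OF assms] field_simps)

lemma coercive_matrix_norm_mult_ge_matrix_inv:
  fixes H :: "real^'n^'n"
  assumes "\<mu> > 0" and coercive: "\<And>v. \<mu> * (v \<bullet> v) \<le> v \<bullet> (H *v v)"
  shows "\<mu>\<^sup>2 * norm (matrix_inv H *v w) \<le> norm (H *v w)"
proof -
  have "\<mu> * (\<mu> * norm (matrix_inv H *v w)) \<le> \<mu> * norm w"
    using coercive_matrix_norm_matrix_inv_mult_le[OF assms, of w] \<open>\<mu> > 0\<close>
    by (simp add: field_simps)
  also have "\<dots> \<le> norm (H *v w)"
    by (rule coercive_matrix_norm_mult_ge[OF coercive])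
  finally show ?thesis
    by (simp add: power2_eq_square mult.assoc)
qed

lemma D3xyy_zero [simp]: "D3xyy Hxy x y 0 = 0"
  unfolding D3xyy_def by (simp add: tendsto_Lim[OF trivial_limit_at tendsto_const])

lemma D3yyy_zero [simp]: "D3yyy Hyy x y 0 = 0"
  unfolding D3yyy_def by (simp add: tendsto_Lim[OF trivial_limit_at tendsto_const])

lemma JAx_of_critical:
  assumes "Gy x y = 0"
  shows "JAx Gy Hyy Hxy x y = - (Hxy x y ** matrix_inv (Hyy x y))"
  unfolding JAx_def assms by (simp add: vec_eq_iff matrix_matrix_mult_def)

lemma JAy_of_critical:
  assumes "Gy x y = 0"
  shows "JAy Gy Hyy x y = 0"
  unfolding JAy_def assms by (simp add: vec_eq_iff matrix_matrix_mult_def)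

lemma norm_JAy_mult_le:
  fixes Hyy :: "real^'n \<Rightarrow> real^'p \<Rightarrow> real^'p^'p"
  assumes "\<mu> > 0" and coercive: "\<And>v. \<mu> * (v \<bullet> v) \<le> v \<bullet> (Hyy x y *v v)"
    and "((\<lambda>z. Hyy (fst z) (snd z)) has_derivative H') (at (x, y))"
    and lipschitz: "\<And>a b a' b'. mat_norm (Hyy a b - Hyy a' b') \<le> Q * dist (a, b) (a', b')"
    and "Q \<ge> 0"
  shows "norm (JAy Gy Hyy x y *v d) \<le> Q * norm (matrix_inv (Hyy x y) *v Gy x y) * (norm d / \<mu>)"
proof -
  let ?v = "matrix_inv (Hyy x y) *v Gy x y"
  have "norm (JAy Gy Hyy x y *v d) = norm (D3yyy Hyy x y ?v *v (matrix_inv (Hyy x y) *v d))"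
    unfolding JAy_def by (simp add: matrix_vector_mul_assoc)
  also have "\<dots> \<le> Q * norm ?v * norm (matrix_inv (Hyy x y) *v d)"
    unfolding D3yyy_def by (rule norm_Lim_directional_difference_quotient_le[OF assms(3) lipschitz])
  also have "\<dots> \<le> Q * norm ?v * (norm d / \<mu>)"
    using coercive_matrix_norm_matrix_inv_mult_le[OF assms(1,2)] \<open>Q \<ge> 0\<close>
    by (intro mult_left_mono) simp_all
  finally show ?thesis .
qed

lemma Dh_eq_Dh_hat_of_critical:
  assumes "Gy x y = 0"
  shows "Dh \<beta> Df Gy Hyy Hxy x y = Dh_hat \<beta> Df Gy Hyy Hxy x y"
  unfolding Dh_def Dh_hat_def
  by (intro image_cong) (auto simp: assms JAx_of_critical JAy_of_critical
                                    uminus_matrix_vector_mult matrix_vector_mul_assoc)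

lemma critical_of_Dh_hat_stationary:
  assumes "\<beta> \<noteq> 0" and "0 \<in> Dh_hat \<beta> Df Gy Hyy Hxy x y"
  shows "Gy x y = 0"
  using assms unfolding Dh_hat_def by (auto simp: zero_prod_def)

lemma critical_of_Dh_stationary:
  fixes Hyy :: "real^'n \<Rightarrow> real^'p \<Rightarrow> real^'p^'p"
  assumes "\<mu> > 0" and coercive: "\<And>v. \<mu> * (v \<bullet> v) \<le> v \<bullet> (Hyy x y *v v)"
    and Hyy_deriv: "((\<lambda>z. Hyy (fst z) (snd z)) has_derivative H') (at (x, y))"
    and Hyy_lipschitz: "\<And>a b a' b'. mat_norm (Hyy a b - Hyy a' b') \<le> Q * dist (a, b) (a', b')"
    and "Q \<ge> 0"
    and Df_bounded: "\<And>d. d \<in> Df x (A_map Gy Hyy x y) \<Longrightarrow> norm d \<le> M"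
    and beta: "M * Q < \<beta> * \<mu> ^ 3"
    and stationary: "0 \<in> Dh \<beta> Df Gy Hyy Hxy x y"
  shows "Gy x y = 0"
proof -
  let ?H = "Hyy x y"
  let ?v = "matrix_inv ?H *v Gy x y"
  obtain dx dy where "(dx, dy) \<in> Df x (A_map Gy Hyy x y)"
    and stationary_y: "JAy Gy Hyy x y *v dy + \<beta> *\<^sub>R (?H *v Gy x y) = 0"
    using stationary unfolding Dh_def by (auto simp: zero_prod_def)
  then have "norm dy \<le> M"
    using Df_bounded norm_snd_le[of dy dx] by (meson order_trans)
  then have "0 < \<beta> * \<mu> ^ 3"
    using beta \<open>Q \<ge> 0\<close> by (meson norm_ge_zero mult_nonneg_nonneg order_trans order_le_less_trans)
  then have "\<beta> > 0"
    using \<open>\<mu> > 0\<close> by (simp add: zero_less_mult_iff)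
  have "\<beta> * (\<mu>\<^sup>2 * norm ?v) \<le> norm (\<beta> *\<^sub>R (?H *v Gy x y))"
    using coercive_matrix_norm_mult_ge_matrix_inv[OF \<open>\<mu> > 0\<close> coercive] \<open>\<beta> > 0\<close>
    by (simp add: mult_left_mono)
  also have "\<dots> = norm (JAy Gy Hyy x y *v dy)"
    using stationary_y by (metis add_eq_0_iff norm_minus_cancel)
  also have "\<dots> \<le> Q * norm ?v * (norm dy / \<mu>)"
    by (rule norm_JAy_mult_le[OF \<open>\<mu> > 0\<close> coercive Hyy_deriv Hyy_lipschitz \<open>Q \<ge> 0\<close>])
  also have "\<dots> \<le> Q * norm ?v * (M / \<mu>)"
    using \<open>norm dy \<le> M\<close> \<open>\<mu> > 0\<close> \<open>Q \<ge> 0\<close> by (intro mult_left_mono divide_right_mono) simp_all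
  finally have "(\<beta> * \<mu> ^ 3 - M * Q) * norm ?v \<le> 0"
    using \<open>\<mu> > 0\<close> by (simp add: field_simps power2_eq_square power3_eq_cube)
  then have "norm ?v = 0"
    using beta by (simp add: mult_le_0_iff)
  then show ?thesis
    using invertible_matrix_inv(1)[OF coercive_matrix_invertible[OF \<open>\<mu> > 0\<close> coercive]]
    by (metis norm_eq_zero matrix_vector_mult_0_right)
qed

theorem proposition4p3:
  fixes f :: "real^'n \<Rightarrow> real^'p \<Rightarrow> real"
    and Df :: "real^'n \<Rightarrow> real^'p \<Rightarrow> ((real^'n) \<times> (real^'p)) set"
    and g :: "real^'n \<Rightarrow> real^'p \<Rightarrow> real"
    and Gx :: "real^'n \<Rightarrow> real^'p \<Rightarrow> real^'n"
    and Gy :: "real^'n \<Rightarrow> real^'p \<Rightarrow> real^'p"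
    and Hyy :: "real^'n \<Rightarrow> real^'p \<Rightarrow> real^'p^'p"
    and Hxy :: "real^'n \<Rightarrow> real^'p \<Rightarrow> real^'p^'n"
    and Mf \<mu> Lg Qg \<beta> :: real
    and x :: "real^'n" and y :: "real^'p"
  assumes consts_pos: "Mf > 0" "\<mu> > 0" "Lg > 0" "Qg > 0"
    and f_lip: "Mf-lipschitz_on UNIV (\<lambda>z. f (fst z) (snd z))"
    and g_grad: "\<And>a b. ((\<lambda>z. g (fst z) (snd z)) has_derivative
                     (\<lambda>h. Gx a b \<bullet> fst h + Gy a b \<bullet> snd h)) (at (a, b))"
    and Gy_deriv: "\<And>a b. ((\<lambda>z. Gy (fst z) (snd z)) has_derivative
                     (\<lambda>h. transpose (Hxy a b) *v fst h + Hyy a b *v snd h)) (at (a, b))"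
    and Gx_diff: "\<And>a b. (\<lambda>z. Gx (fst z) (snd z)) differentiable (at (a, b))"
    and strongly_convex: "\<And>a b v. \<mu> * (v \<bullet> v) \<le> v \<bullet> (Hyy a b *v v)"
    and grad_lip: "Lg-lipschitz_on UNIV (\<lambda>z. (Gx (fst z) (snd z), Gy (fst z) (snd z)))"
    and Hyy_lip: "\<And>a b a' b'. mat_norm (Hyy a b - Hyy a' b') \<le> Qg * dist (a, b) (a', b')"
    and Hxy_lip: "\<And>a b a' b'. mat_norm (Hxy a b - Hxy a' b') \<le> Qg * dist (a, b) (a', b')"
    and Hyy_C1: "\<exists>D :: (real^'n) \<times> (real^'p) \<Rightarrow> (((real^'n) \<times> (real^'p)) \<Rightarrow>\<^sub>L (real^'p^'p)).
                   (\<forall>z. ((\<lambda>z. Hyy (fst z) (snd z)) has_derivative blinfun_apply (D z)) (at z))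
                   \<and> continuous_on UNIV D"
    and f_potential: "potential_of (\<lambda>z. f (fst z) (snd z)) (\<lambda>z. Df (fst z) (snd z))"
    and Df_values: "\<And>a b. compact (Df a b) \<and> convex (Df a b) \<and> (\<forall>d\<in>Df a b. norm d \<le> Mf)"
    and beta: "\<beta> \<ge> 2 * Mf * Qg / \<mu> ^ 3"
  shows "0 \<in> Dh \<beta> Df Gy Hyy Hxy x y \<longleftrightarrow> 0 \<in> Dh_hat \<beta> Df Gy Hyy Hxy x y"
proof -
  have "2 * (Mf * Qg) \<le> \<beta> * \<mu> ^ 3"
    using beta consts_pos(2) by (simp add: field_simps)
  moreover have "0 < Mf * Qg"
    using consts_pos by simp
  ultimately have beta_large: "Mf * Qg < \<beta> * \<mu> ^ 3" and "\<beta> \<noteq> 0"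
    by auto
  obtain DH where Hyy_deriv: "((\<lambda>z. Hyy (fst z) (snd z)) has_derivative blinfun_apply (DH (x, y))) (at (x, y))"
    using Hyy_C1 by blast
  have "Gy x y = 0" if "0 \<in> Dh \<beta> Df Gy Hyy Hxy x y \<or> 0 \<in> Dh_hat \<beta> Df Gy Hyy Hxy x y"
    using that critical_of_Dh_hat_stationary[OF \<open>\<beta> \<noteq> 0\<close>]
      critical_of_Dh_stationary[OF consts_pos(2) strongly_convex Hyy_deriv Hyy_lip _ _ beta_large]
      consts_pos(4) Df_values by (meson less_imp_le)
  then show ?thesis
    using Dh_eq_Dh_hat_of_critical by blast
qed

end
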